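(* Let $g$ be a probability density on $(0,\infty)$, let $\mu_1 \sim g$, and define $p(\zeta) = P_g(\mu_1 \le \zeta)$ and $v(\zeta) = E_g(\zeta - \mu_1)^+$. Let $\lambda > 0$ and $n \ge 1$, and for $\zeta > 0$ define $$r_n(\zeta) = \frac{\lambda}{p(\zeta)} + n\, E_g(\mu_1 \mid \mu_1 \le \zeta).$$ Let $\zeta_n$ be such that $v(\zeta_n) = \frac{\lambda}{n}$. Then $$\inf_{\zeta>0} r_n(\zeta) = r_n(\zeta_n) = n\zeta_n.$$
   Context: $a^+ = \max(0,a)$. In the paper, $\lambda = \int_0^\infty E_\mu(X \mid X>0)\, g(\mu)\, d\mu$ is the mean of the first non-zero reward of a random arm, where $X \sim F_\mu$ is a non-negative reward with mean $\mu$; $r_n(\zeta)$ is the asymptotic regret of an idealized algorithm that rejects arms with mean above $\zeta$. *)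

theory Defs
  imports "HOL-Analysis.Analysis"
begin

definition is_density_pos :: "(real \<Rightarrow> real) \<Rightarrow> bool" where
  "is_density_pos g \<longleftrightarrow> (\<forall>x>0. 0 \<le> g x) \<and> set_integrable lborel {0<..} g
     \<and> (LBINT x:{0<..}. g x) = 1"

definition pfun :: "(real \<Rightarrow> real) \<Rightarrow> real \<Rightarrow> real" where
  "pfun g \<zeta> = (LBINT x:{0<..\<zeta>}. g x)"

definition vfun :: "(real \<Rightarrow> real) \<Rightarrow> real \<Rightarrow> real" where
  "vfun g \<zeta> = (LBINT x:{0<..}. max 0 (\<zeta> - x) * g x)"

text \<open>E_g(mu_1 | mu_1 <= zeta), meaningful when pfun g zeta > 0\<close>
definition condmean :: "(real \<Rightarrow> real) \<Rightarrow> real \<Rightarrow> real" where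
  "condmean g \<zeta> = (LBINT x:{0<..\<zeta>}. x * g x) / pfun g \<zeta>"

text \<open>r_n(zeta) = lam / p(zeta) + n E_g(mu_1 | mu_1 <= zeta), with value +infinity
  when p(zeta) = 0 (then lam/p(zeta) = +infinity).\<close>
definition rfun :: "(real \<Rightarrow> real) \<Rightarrow> real \<Rightarrow> nat \<Rightarrow> real \<Rightarrow> ereal" where
  "rfun g lam n \<zeta> = (if pfun g \<zeta> = 0 then \<infinity>
     else ereal (lam / pfun g \<zeta> + real n * condmean g \<zeta>))"

end

theory Submission
  imports Defs
begin

(* The function v is convex with supergradient p, i.e. v(a) >= v(b) + (a - b) p(b) for all a, b,
   and v(z) = z p(z) - M(z) with M(z) = E(mu_1; mu_1 <= z). Since r_n(z) = (lam + n M(z)) / p(z),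
   the bound r_n(z) >= n z_n is equivalent to lam/n >= z_n p(z) - M(z) = v(z) + (z_n - z) p(z),
   which is the supergradient inequality at z_n because v(z_n) = lam/n; at z = z_n it is an
   equality. *)

definition truncated_moment :: "(real \<Rightarrow> real) \<Rightarrow> real \<Rightarrow> real" where
  "truncated_moment g \<zeta> = (LBINT x:{0<..\<zeta>}. x * g x)"

definition density_on_pos :: "(real \<Rightarrow> real) \<Rightarrow> real \<Rightarrow> real" where
  "density_on_pos g x = indicator {0<..} x * g x"

lemma pfun_eq_integral:
  "pfun g \<zeta> = (\<integral>x. indicator {..\<zeta>} x * density_on_pos g x \<partial>lborel)"
  unfolding pfun_def set_lebesgue_integral_def density_on_pos_def
  by (rule Bochner_Integration.integral_cong) (auto simp: indicator_def)

lemma vfun_eq_integral: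
  "vfun g \<zeta> = (\<integral>x. max 0 (\<zeta> - x) * density_on_pos g x \<partial>lborel)"
  unfolding vfun_def set_lebesgue_integral_def density_on_pos_def
  by (rule Bochner_Integration.integral_cong) (auto simp: indicator_def)

lemma truncated_moment_eq_integral:
  "truncated_moment g \<zeta> = (\<integral>x. (x * indicator {..\<zeta>} x) * density_on_pos g x \<partial>lborel)"
  unfolding truncated_moment_def set_lebesgue_integral_def density_on_pos_def
  by (rule Bochner_Integration.integral_cong) (auto simp: indicator_def)

lemma condmean_eq_truncated_moment: "condmean g \<zeta> = truncated_moment g \<zeta> / pfun g \<zeta>"
  by (simp add: condmean_def truncated_moment_def)

lemma integrable_bounded_mult:
  fixes G h :: "real \<Rightarrow> real"
  assumes "integrable lborel G" "h \<in> borel_measurable borel"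
    and "\<And>x. norm (h x * G x) \<le> norm (B * G x)"
  shows "integrable lborel (\<lambda>x. h x * G x)"
proof (rule Bochner_Integration.integrable_bound[of _ "\<lambda>x. B * G x"])
  show "integrable lborel (\<lambda>x. B * G x)" using assms(1) by simp
  have "G \<in> borel_measurable lborel" using assms(1) by auto
  then show "(\<lambda>x. h x * G x) \<in> borel_measurable lborel" using assms(2) by measurable
  show "AE x in lborel. norm (h x * G x) \<le> norm (B * G x)" using assms(3) by simp
qed

context
  fixes g :: "real \<Rightarrow> real"
  assumes density: "is_density_pos g"
begin

lemma density_on_pos_nonneg: "0 \<le> density_on_pos g x"
  using density unfolding is_density_pos_def density_on_pos_def by (auto simp: indicator_def)

lemma density_on_pos_nonpos: "x \<le> 0 \<Longrightarrow> density_on_pos g x = 0"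
  unfolding density_on_pos_def by simp

lemma integrable_density_on_pos: "integrable lborel (density_on_pos g)"
  using density unfolding is_density_pos_def density_on_pos_def set_integrable_def by simp

lemma integrable_indicator_density:
  "integrable lborel (\<lambda>x. indicator {..\<zeta>} x * density_on_pos g x)"
  by (rule integrable_bounded_mult[OF integrable_density_on_pos, of _ 1])
    (auto simp: indicator_def density_on_pos_nonneg abs_mult)

lemma integrable_truncated_moment:
  "integrable lborel (\<lambda>x. (x * indicator {..\<zeta>} x) * density_on_pos g x)"
proof (rule integrable_bounded_mult[OF integrable_density_on_pos, of _ "\<bar>\<zeta>\<bar>"])
  show "(\<lambda>x. x * indicator {..\<zeta>} x) \<in> borel_measurable borel" by measurable
  fix x show "norm (x * indicator {..\<zeta>} x * density_on_pos g x) \<le> norm (\<bar>\<zeta>\<bar> * density_on_pos g x)"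
    using density_on_pos_nonpos[of x] density_on_pos_nonneg[of x]
    by (cases "x \<le> 0") (auto simp: indicator_def abs_mult intro!: mult_right_mono)
qed

lemma integrable_vfun:
  "integrable lborel (\<lambda>x. max 0 (\<zeta> - x) * density_on_pos g x)"
proof (rule integrable_bounded_mult[OF integrable_density_on_pos, of _ "\<bar>\<zeta>\<bar>"])
  show "(\<lambda>x. max 0 (\<zeta> - x)) \<in> borel_measurable borel" by measurable
  fix x show "norm (max 0 (\<zeta> - x) * density_on_pos g x) \<le> norm (\<bar>\<zeta>\<bar> * density_on_pos g x)"
    using density_on_pos_nonpos[of x] density_on_pos_nonneg[of x]
    by (cases "x \<le> 0") (auto simp: abs_mult intro!: mult_right_mono)
qed

lemma pfun_nonneg: "0 \<le> pfun g \<zeta>"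
  unfolding pfun_eq_integral by (rule integral_nonneg_AE) (auto simp: density_on_pos_nonneg)

lemma truncated_moment_nonneg: "0 \<le> truncated_moment g \<zeta>"
  unfolding truncated_moment_eq_integral
proof (rule integral_nonneg_AE, rule AE_I2)
  fix x show "0 \<le> x * indicator {..\<zeta>} x * density_on_pos g x"
    using density_on_pos_nonneg[of x] density_on_pos_nonpos[of x]
    by (cases "x \<le> 0") (auto simp: indicator_def)
qed

lemma vfun_eq_pfun_truncated_moment: "vfun g \<zeta> = \<zeta> * pfun g \<zeta> - truncated_moment g \<zeta>"
proof -
  have "vfun g \<zeta> = (\<integral>x. \<zeta> * (indicator {..\<zeta>} x * density_on_pos g x)
      - (x * indicator {..\<zeta>} x) * density_on_pos g x \<partial>lborel)"
    unfolding vfun_eq_integral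
    by (rule Bochner_Integration.integral_cong) (auto simp: indicator_def algebra_simps)
  also have "\<dots> = \<zeta> * pfun g \<zeta> - truncated_moment g \<zeta>"
    using integrable_indicator_density integrable_truncated_moment
    by (simp add: pfun_eq_integral truncated_moment_eq_integral)
  finally show ?thesis .
qed

lemma vfun_supergradient: "(a - b) * pfun g b \<le> vfun g a - vfun g b"
proof -
  have "(a - b) * pfun g b = (\<integral>x. (a - b) * indicator {..b} x * density_on_pos g x \<partial>lborel)"
    unfolding pfun_eq_integral by (simp add: mult.assoc)
  also have "\<dots> \<le> (\<integral>x. max 0 (a - x) * density_on_pos g x
      - max 0 (b - x) * density_on_pos g x \<partial>lborel)"
  proof (rule integral_mono)
    show "integrable lborel (\<lambda>x. (a - b) * indicator {..b} x * density_on_pos g x)"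
      using integrable_indicator_density[of b] by (simp add: mult.assoc)
    show "integrable lborel
        (\<lambda>x. max 0 (a - x) * density_on_pos g x - max 0 (b - x) * density_on_pos g x)"
      using integrable_vfun by auto
    fix x
    have "(a - b) * indicator {..b} x \<le> max 0 (a - x) - max 0 (b - x)"
      by (auto simp: indicator_def)
    then have "(a - b) * indicator {..b} x * density_on_pos g x
        \<le> (max 0 (a - x) - max 0 (b - x)) * density_on_pos g x"
      using density_on_pos_nonneg by (rule mult_right_mono)
    then show "(a - b) * indicator {..b} x * density_on_pos g x
        \<le> max 0 (a - x) * density_on_pos g x - max 0 (b - x) * density_on_pos g x"
      by (simp add: algebra_simps)
  qed
  also have "\<dots> = vfun g a - vfun g b"
    using integrable_vfun by (simp add: vfun_eq_integral)
  finally show ?thesis .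
qed

lemma pfun_pos_if_vfun_pos:
  assumes "0 < vfun g \<zeta>"
  shows "0 < pfun g \<zeta>" and "0 < \<zeta>"
proof -
  have "0 < \<zeta> * pfun g \<zeta>"
    using assms vfun_eq_pfun_truncated_moment[of \<zeta>] truncated_moment_nonneg[of \<zeta>] by linarith
  then show "0 < pfun g \<zeta>" "0 < \<zeta>"
    using pfun_nonneg[of \<zeta>] by (auto simp: zero_less_mult_iff)
qed

end

lemma rfun_eq_ratio:
  assumes "0 < pfun g \<zeta>"
  shows "rfun g lam n \<zeta> = ereal ((lam + real n * truncated_moment g \<zeta>) / pfun g \<zeta>)"
  using assms by (simp add: rfun_def condmean_eq_truncated_moment add_divide_distrib)

lemma rfun_at_level:
  assumes "is_density_pos g" "0 < pfun g \<zeta>n" "0 < n" "vfun g \<zeta>n = lam / real n"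
  shows "rfun g lam n \<zeta>n = ereal (real n * \<zeta>n)"
proof -
  have "lam = real n * (\<zeta>n * pfun g \<zeta>n - truncated_moment g \<zeta>n)"
    using assms(3,4) vfun_eq_pfun_truncated_moment[OF assms(1), of \<zeta>n] by (simp add: field_simps)
  then show ?thesis
    using assms(2) by (simp add: rfun_eq_ratio field_simps)
qed

lemma rfun_ge_level:
  assumes "is_density_pos g" "0 < n" "vfun g \<zeta>n = lam / real n"
  shows "ereal (real n * \<zeta>n) \<le> rfun g lam n \<zeta>"
proof (cases "pfun g \<zeta> = 0")
  case True
  then show ?thesis by (simp add: rfun_def)
next
  case False
  then have p_pos: "0 < pfun g \<zeta>" using pfun_nonneg[OF assms(1), of \<zeta>] by simp
  have "real n * (\<zeta>n * pfun g \<zeta> - truncated_moment g \<zeta>) \<le> lam"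
    using vfun_supergradient[OF assms(1), of \<zeta>n \<zeta>] vfun_eq_pfun_truncated_moment[OF assms(1), of \<zeta>]
      assms(2,3) by (simp add: field_simps)
  then have "real n * \<zeta>n \<le> (lam + real n * truncated_moment g \<zeta>) / pfun g \<zeta>"
    using p_pos by (simp add: pos_le_divide_eq algebra_simps)
  then show ?thesis using p_pos by (simp add: rfun_eq_ratio)
qed

theorem lemma1:
  fixes g :: "real \<Rightarrow> real" and lam :: real and n :: nat and \<zeta>n :: real
  assumes "is_density_pos g"
    and "lam > 0" and "n \<ge> 1"
    and "vfun g \<zeta>n = lam / real n"
  shows "(INF \<zeta>\<in>{0<..}. rfun g lam n \<zeta>) = rfun g lam n \<zeta>n
         \<and> rfun g lam n \<zeta>n = ereal (real n * \<zeta>n)"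
proof -
  have n_pos: "0 < n" using assms(3) by simp
  have "0 < vfun g \<zeta>n" using assms(2,4) n_pos by simp
  then have p_pos: "0 < pfun g \<zeta>n" and \<zeta>n_pos: "0 < \<zeta>n"
    using pfun_pos_if_vfun_pos[OF assms(1)] by auto
  have at_level: "rfun g lam n \<zeta>n = ereal (real n * \<zeta>n)"
    using rfun_at_level[OF assms(1) p_pos n_pos assms(4)] .
  have "(INF \<zeta>\<in>{0<..}. rfun g lam n \<zeta>) = rfun g lam n \<zeta>n"
  proof (rule antisym)
    show "(INF \<zeta>\<in>{0<..}. rfun g lam n \<zeta>) \<le> rfun g lam n \<zeta>n"
      using \<zeta>n_pos by (simp add: INF_lower)
    show "rfun g lam n \<zeta>n \<le> (INF \<zeta>\<in>{0<..}. rfun g lam n \<zeta>)"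
      using rfun_ge_level[OF assms(1) n_pos assms(4)] at_level by (simp add: INF_greatest)
  qed
  with at_level show ?thesis by simp
qed

end
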